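(* Let $\{\alpha_i\}_{i=1}^N$ be an optimal solution of $$\hat{\mathcal{P}}_1:\ \min_{\{\alpha_i\}}\ \sum_{n=1}^N (1-\alpha_n)c_n\quad\text{s.t.}\quad \sum_{k=1}^{i}\alpha_k p^{inv}_{H,k}\tau\le\sum_{l=1}^{i}E_{H,l},\ \ \alpha_i p^{inv}_{H,i}\le p_H^{\max},\ \ \alpha_i\in\{0,1\},\ \ \forall i\in\{1,\dots,N\}.$$ Then there do not exist indices $i<j$ such that $\alpha_i=1$, $\alpha_j=0$, $c_i<c_j$ and $p^{inv}_{H,i}\ge p^{inv}_{H,j}$.
   Context: Data: $N$, $\tau>0$, $E_{H,i}\ge0$, channel gains $h_{G,i},h_{H,i}>0$, $p_G^{\max},p_H^{\max}>0$, $R,W,\sigma^2>0$, weights $w_G,w_D>0$. $p^{inv}_{j,i}=(2^{R/(W\tau)}-1)\sigma^2 h_{j,i}^{-1}$ for $j\in\{G,H\}$, $\kappa=\min\{p_G^{\max},w_D(w_G\tau)^{-1}\}$, and $c_i=w_D$ if $p^{inv}_{G,i}>\kappa$, $c_i=w_G p^{inv}_{G,i}\tau$ otherwise. *)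

theory Defs
  imports Complex_Main
begin

definition p_inv :: "real \<Rightarrow> real \<Rightarrow> real \<Rightarrow> real \<Rightarrow> real \<Rightarrow> real" where
  "p_inv R W \<tau> \<sigma>2 h = (2 powr (R / (W * \<tau>)) - 1) * \<sigma>2 / h"

definition kappa :: "real \<Rightarrow> real \<Rightarrow> real \<Rightarrow> real \<Rightarrow> real" where
  "kappa pGmax wD wG \<tau> = min pGmax (wD / (wG * \<tau>))"

definition cost_coef :: "real \<Rightarrow> real \<Rightarrow> real \<Rightarrow> real \<Rightarrow> real \<Rightarrow> real" where
  "cost_coef pG pGmax wD wG \<tau> =
     (if pG > kappa pGmax wD wG \<tau> then wD else wG * pG * \<tau>)"

definition feasible_P1 ::
  "nat \<Rightarrow> real \<Rightarrow> (nat \<Rightarrow> real) \<Rightarrow> (nat \<Rightarrow> real) \<Rightarrow> real \<Rightarrow> (nat \<Rightarrow> real) \<Rightarrow> bool" where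
  "feasible_P1 N \<tau> pH E pHmax \<alpha> \<longleftrightarrow>
     (\<forall>i\<in>{1..N}.
        (\<Sum>k=1..i. \<alpha> k * pH k * \<tau>) \<le> (\<Sum>l=1..i. E l)
      \<and> \<alpha> i * pH i \<le> pHmax
      \<and> \<alpha> i \<in> {0, 1})"

definition objective_P1 :: "nat \<Rightarrow> (nat \<Rightarrow> real) \<Rightarrow> (nat \<Rightarrow> real) \<Rightarrow> real" where
  "objective_P1 N c \<alpha> = (\<Sum>n=1..N. (1 - \<alpha> n) * c n)"

definition optimal_P1 ::
  "nat \<Rightarrow> real \<Rightarrow> (nat \<Rightarrow> real) \<Rightarrow> (nat \<Rightarrow> real) \<Rightarrow> real \<Rightarrow> (nat \<Rightarrow> real) \<Rightarrow> (nat \<Rightarrow> real) \<Rightarrow> bool" where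
  "optimal_P1 N \<tau> pH E pHmax c \<alpha> \<longleftrightarrow>
     feasible_P1 N \<tau> pH E pHmax \<alpha> \<and>
     (\<forall>\<beta>. feasible_P1 N \<tau> pH E pHmax \<beta> \<longrightarrow> objective_P1 N c \<alpha> \<le> objective_P1 N c \<beta>)"

end

theory Submission
  imports Defs
begin

text \<open>Exchange argument: if an optimal schedule served user \<open>i\<close> but not a later user \<open>j\<close>
  with \<open>p\<^sub>H\<^sub>,\<^sub>j \<le> p\<^sub>H\<^sub>,\<^sub>i\<close>, serving \<open>j\<close> instead of \<open>i\<close> never increases any prefix energy
  consumption nor violates the power cap, so the swapped schedule is feasible, and it changes
  the objective by \<open>c\<^sub>i - c\<^sub>j\<close>; optimality therefore forces \<open>c\<^sub>j \<le> c\<^sub>i\<close>.\<close>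

lemma p_inv_pos:
  assumes "R > 0" "W > 0" "\<tau> > 0" "\<sigma>2 > 0" "h > 0"
  shows "p_inv R W \<tau> \<sigma>2 h > 0"
proof -
  have "R / (W * \<tau>) > 0" using assms by simp
  hence "2 powr (R / (W * \<tau>)) > 1" by (simp add: less_powr_iff)
  thus ?thesis using assms unfolding p_inv_def by simp
qed

lemma sum_exchange:
  fixes \<alpha> w :: "'a \<Rightarrow> real"
  assumes "finite A" "i \<noteq> j" "\<alpha> i = 1" "\<alpha> j = 0"
  shows "(\<Sum>k\<in>A. (\<alpha>(i := 0, j := 1)) k * w k)
       = (\<Sum>k\<in>A. \<alpha> k * w k) - (if i \<in> A then w i else 0) + (if j \<in> A then w j else 0)"
proof -
  have "(\<alpha>(i := 0, j := 1)) k * w k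
      = \<alpha> k * w k - (if k = i then w i else 0) + (if k = j then w j else 0)" for k
    using assms by auto
  then show ?thesis
    using \<open>finite A\<close> by (simp add: sum.distrib sum_subtractf sum.delta)
qed

lemma objective_P1_exchange:
  assumes "i \<in> {1..N}" "j \<in> {1..N}" "i \<noteq> j" "\<alpha> i = 1" "\<alpha> j = 0"
  shows "objective_P1 N c (\<alpha>(i := 0, j := 1)) = objective_P1 N c \<alpha> + c i - c j"
proof -
  have "objective_P1 N c \<beta> = (\<Sum>n=1..N. c n) - (\<Sum>n=1..N. \<beta> n * c n)" for \<beta>
    unfolding objective_P1_def by (simp add: left_diff_distrib sum_subtractf)
  then show ?thesis
    using sum_exchange[of "{1..N}" i j \<alpha> c] assms by simp
qed

lemma feasible_P1_exchange:
  assumes feas: "feasible_P1 N \<tau> pH E pHmax \<alpha>"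
    and ij: "1 \<le> i" "i < j" "j \<le> N" "\<alpha> i = 1" "\<alpha> j = 0"
    and "0 \<le> \<tau>" "0 \<le> pH i" "pH j \<le> pH i"
  shows "feasible_P1 N \<tau> pH E pHmax (\<alpha>(i := 0, j := 1))"
  unfolding feasible_P1_def
proof (intro ballI conjI)
  fix n assume n: "n \<in> {1..N}"
  let ?\<beta> = "\<alpha>(i := 0, j := 1)"
  have "pH j * \<tau> \<le> pH i * \<tau>" "0 \<le> pH i * \<tau>"
    using \<open>0 \<le> \<tau>\<close> \<open>0 \<le> pH i\<close> \<open>pH j \<le> pH i\<close> by (simp_all add: mult_right_mono)
  then have "(\<Sum>k=1..n. ?\<beta> k * (pH k * \<tau>)) \<le> (\<Sum>k=1..n. \<alpha> k * (pH k * \<tau>))"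
    using sum_exchange[of "{1..n}" i j \<alpha> "\<lambda>k. pH k * \<tau>"] ij by auto
  moreover have "(\<Sum>k=1..n. \<alpha> k * pH k * \<tau>) \<le> (\<Sum>l=1..n. E l)"
    using feas n unfolding feasible_P1_def by blast
  ultimately show "(\<Sum>k=1..n. ?\<beta> k * pH k * \<tau>) \<le> (\<Sum>l=1..n. E l)"
    by (simp add: mult.assoc)
  have "\<alpha> i * pH i \<le> pHmax" "\<alpha> n * pH n \<le> pHmax" "\<alpha> n \<in> {0, 1}"
    using feas n ij unfolding feasible_P1_def by (auto dest: bspec[of _ _ i])
  then show "?\<beta> n * pH n \<le> pHmax" "?\<beta> n \<in> {0, 1}"
    using ij \<open>0 \<le> pH i\<close> \<open>pH j \<le> pH i\<close> by auto
qed

lemma optimal_P1_exchange_cost_le: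
  assumes opt: "optimal_P1 N \<tau> pH E pHmax c \<alpha>"
    and ij: "1 \<le> i" "i < j" "j \<le> N" "\<alpha> i = 1" "\<alpha> j = 0"
    and "0 \<le> \<tau>" "0 \<le> pH i" "pH j \<le> pH i"
  shows "c j \<le> c i"
proof -
  let ?\<beta> = "\<alpha>(i := 0, j := 1)"
  have "feasible_P1 N \<tau> pH E pHmax ?\<beta>"
    using assms by (intro feasible_P1_exchange) (auto simp: optimal_P1_def)
  with opt have "objective_P1 N c \<alpha> \<le> objective_P1 N c ?\<beta>"
    unfolding optimal_P1_def by blast
  also have "\<dots> = objective_P1 N c \<alpha> + c i - c j"
    using ij by (intro objective_P1_exchange) auto
  finally show ?thesis by simp
qed

theorem proposition1:
  fixes N :: nat and \<tau> R W \<sigma>2 pGmax pHmax wG wD :: real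
    and EH hG hH \<alpha> :: "nat \<Rightarrow> real"
  assumes "\<tau> > 0" and "\<And>i. i \<in> {1..N} \<Longrightarrow> EH i \<ge> 0"
    and "\<And>i. i \<in> {1..N} \<Longrightarrow> hG i > 0" and "\<And>i. i \<in> {1..N} \<Longrightarrow> hH i > 0"
    and "pGmax > 0" and "pHmax > 0" and "R > 0" and "W > 0" and "\<sigma>2 > 0"
    and "wG > 0" and "wD > 0"
    and opt: "optimal_P1 N \<tau> (\<lambda>i. p_inv R W \<tau> \<sigma>2 (hH i)) EH pHmax
                (\<lambda>i. cost_coef (p_inv R W \<tau> \<sigma>2 (hG i)) pGmax wD wG \<tau>) \<alpha>"
  shows "\<not> (\<exists>i j. 1 \<le> i \<and> i < j \<and> j \<le> N \<and> \<alpha> i = 1 \<and> \<alpha> j = 0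
              \<and> cost_coef (p_inv R W \<tau> \<sigma>2 (hG i)) pGmax wD wG \<tau>
                  < cost_coef (p_inv R W \<tau> \<sigma>2 (hG j)) pGmax wD wG \<tau>
              \<and> p_inv R W \<tau> \<sigma>2 (hH i) \<ge> p_inv R W \<tau> \<sigma>2 (hH j))"
proof
  assume "\<exists>i j. 1 \<le> i \<and> i < j \<and> j \<le> N \<and> \<alpha> i = 1 \<and> \<alpha> j = 0
              \<and> cost_coef (p_inv R W \<tau> \<sigma>2 (hG i)) pGmax wD wG \<tau>
                  < cost_coef (p_inv R W \<tau> \<sigma>2 (hG j)) pGmax wD wG \<tau>
              \<and> p_inv R W \<tau> \<sigma>2 (hH i) \<ge> p_inv R W \<tau> \<sigma>2 (hH j)"
  then obtain i j where ij: "1 \<le> i" "i < j" "j \<le> N" "\<alpha> i = 1" "\<alpha> j = 0"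
    and cost_lt: "cost_coef (p_inv R W \<tau> \<sigma>2 (hG i)) pGmax wD wG \<tau>
                  < cost_coef (p_inv R W \<tau> \<sigma>2 (hG j)) pGmax wD wG \<tau>"
    and power_ge: "p_inv R W \<tau> \<sigma>2 (hH i) \<ge> p_inv R W \<tau> \<sigma>2 (hH j)"
    by blast
  have "p_inv R W \<tau> \<sigma>2 (hH i) > 0"
    using ij assms(4) \<open>R > 0\<close> \<open>W > 0\<close> \<open>\<tau> > 0\<close> \<open>\<sigma>2 > 0\<close> by (intro p_inv_pos) auto
  then have "cost_coef (p_inv R W \<tau> \<sigma>2 (hG j)) pGmax wD wG \<tau>
           \<le> cost_coef (p_inv R W \<tau> \<sigma>2 (hG i)) pGmax wD wG \<tau>"
    using optimal_P1_exchange_cost_le[OF opt ij] power_ge \<open>\<tau> > 0\<close> by simp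
  with cost_lt show False by simp
qed

end
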